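(* Let $\mathcal N=(\mathcal V,\mathcal R)$ be a non-autocatalytic reaction network on $n$ species, let $\mathbf k\in\mathbb R_{>0}^{\mathcal R}$ be rate constants and $\boldsymbol\tau\in\mathbb R_{\ge 0}^{\mathcal R}$ delay parameters, and let $\mathbf x^*\in\mathbb R^n_{>0}$ be an equilibrium of the delay mass action system $\mathcal N_{\boldsymbol\tau,\mathbf k}$. Let $J_\lambda=J_\lambda(\mathbf x^*,\mathbf k,\boldsymbol\tau)$, $J=J(\mathbf x^*,\mathbf k)$ and $\tilde J=\tilde J(\mathbf x^*,\mathbf k)$ be the matrices defined in the context. Suppose $\det J\neq 0$, $\tilde J_{ii}<0$ for all $i$, and $-\tilde J$ is a $P_0$-matrix. Then every root $\lambda\in\mathbb C$ of the characteristic equation $\det(J_\lambda-\lambda I)=0$ has negative real part.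
   Context: A reaction network $\mathcal N=(\mathcal V,\mathcal R)$ is a finite directed graph whose vertices (complexes) are vectors $\mathbf y\in\mathbb R^n_{\ge 0}$; each edge $\mathbf y\to\mathbf y'$ is a reaction. Species are identified with the standard basis vectors $\mathbf e_1,\dots,\mathbf e_n$. A reaction $\mathbf y\to\mathbf y'$ is autocatalytic if $\mathrm{supp}(\mathbf y)\cap\mathrm{supp}(\mathbf y')\neq\emptyset$ and $y_i'>y_i$ for every $i\in\mathrm{supp}(\mathbf y)\cap\mathrm{supp}(\mathbf y')$; the network is non-autocatalytic if it has no autocatalytic reactions. For $\mathbf x\in\mathbb R^n_{>0}$, write $\mathbf x^{\mathbf y}=\prod_i x_i^{y_i}$. Given rate constants $k_{\mathbf y\to\mathbf y'}>0$ and delays $\tau_{\mathbf y\to\mathbf y'}\ge 0$ (one per reaction), the delay mass action system $\mathcal N_{\boldsymbol\tau,\mathbf k}$ is $\dot{\mathbf x}(t)=\sum_{\mathbf y\to\mathbf y'\in\mathcal R}k_{\mathbf y\to\mathbf y'}[\mathbf x(t-\tau_{\mathbf y\to\mathbf y'})]^{\mathbf y}\mathbf y'-\sum_{\mathbf y\to\mathbf y'\in\mathcal R}k_{\mathbf y\to\mathbf y'}[\mathbf x(t)]^{\mathbf y}\mathbf y$; an equilibrium is a constant solution $\mathbf x^*\in\mathbb R^n_{>0}$. For $\mathbf x\in\mathbb R^n_{>0}$ and $\lambda\in\mathbb C$, define $n\times n$ matrices with entries (row $j$, column $i$): $(J_\lambda)_{ji}=\sum_{\mathbf y\to\mathbf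 y'\in\mathcal R}k_{\mathbf y\to\mathbf y'}\mathbf x^{\mathbf y}\frac{y_i}{x_i}\big(y'_j e^{-\lambda\tau_{\mathbf y\to\mathbf y'}}-y_j\big)$; $J_{ji}=\sum_{\mathbf y\to\mathbf y'}k_{\mathbf y\to\mathbf y'}\mathbf x^{\mathbf y}\frac{y_i}{x_i}(y'_j-y_j)$ (the Jacobian of the delay-free mass action system); and the modified Jacobian $\tilde J_{ji}=\sum_{\mathbf y\to\mathbf y'}k_{\mathbf y\to\mathbf y'}\mathbf x^{\mathbf y}\frac{y_i}{x_i}(y'_j+y_j)$ for $j\neq i$, and $\tilde J_{ii}=\sum_{\mathbf y\to\mathbf y'}k_{\mathbf y\to\mathbf y'}\mathbf x^{\mathbf y}\frac{y_i}{x_i}(y'_i-y_i)$. A real square matrix is a $P_0$-matrix if all its principal minors are non-negative. *)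

theory Defs
  imports "HOL-Analysis.Analysis"
begin

text \<open>Species are indexed by a finite type 'n (so n = CARD('n)); complexes are
  vectors in real^'n; a reaction is a pair (y, y') of complexes.\<close>

definition supp :: "real^'n \<Rightarrow> 'n set" where
  "supp y = {i. y $ i \<noteq> 0}"

definition reaction_network :: "(real^'n) set \<Rightarrow> ((real^'n) \<times> (real^'n)) set \<Rightarrow> bool" where
  "reaction_network V R \<longleftrightarrow> finite V \<and> R \<subseteq> V \<times> V
     \<and> (\<forall>y\<in>V. \<forall>i. y $ i \<ge> 0) \<and> (\<forall>(y, y')\<in>R. y \<noteq> y')"

definition autocatalytic :: "(real^'n) \<times> (real^'n) \<Rightarrow> bool" where
  "autocatalytic r \<longleftrightarrow> (case r of (y, y') \<Rightarrow>
     supp y \<inter> supp y' \<noteq> {} \<and> (\<forall>i\<in>supp y \<inter> supp y'. y' $ i > y $ i))"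

definition non_autocatalytic :: "((real^'n) \<times> (real^'n)) set \<Rightarrow> bool" where
  "non_autocatalytic R \<longleftrightarrow> (\<forall>r\<in>R. \<not> autocatalytic r)"

definition monom_vec :: "real^'n \<Rightarrow> real^'n \<Rightarrow> real" where
  "monom_vec x y = (\<Prod>i\<in>UNIV. (x $ i) powr (y $ i))"

text \<open>An equilibrium of the delay mass action system: a positive constant solution,
  i.e. a positive x at which the right-hand side (with x(t - tau) = x(t) = x) vanishes.\<close>
definition delay_equilibrium ::
  "((real^'n) \<times> (real^'n)) set \<Rightarrow> ((real^'n) \<times> (real^'n) \<Rightarrow> real)
   \<Rightarrow> ((real^'n) \<times> (real^'n) \<Rightarrow> real) \<Rightarrow> real^'n \<Rightarrow> bool" where
  "delay_equilibrium R k tau x \<longleftrightarrow> (\<forall>i. x $ i > 0) \<and>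
     (\<Sum>(y, y')\<in>R. (k (y, y') * monom_vec x y) *\<^sub>R y')
       - (\<Sum>(y, y')\<in>R. (k (y, y') * monom_vec x y) *\<^sub>R y) = 0"

definition J_lambda ::
  "((real^'n) \<times> (real^'n)) set \<Rightarrow> ((real^'n) \<times> (real^'n) \<Rightarrow> real)
   \<Rightarrow> ((real^'n) \<times> (real^'n) \<Rightarrow> real) \<Rightarrow> real^'n \<Rightarrow> complex \<Rightarrow> complex^'n^'n" where
  "J_lambda R k tau x z = (\<chi> j i. \<Sum>(y, y')\<in>R.
      of_real (k (y, y') * monom_vec x y * (y $ i / x $ i)) *
      (of_real (y' $ j) * exp (- z * of_real (tau (y, y'))) - of_real (y $ j)))"

definition J_mat ::
  "((real^'n) \<times> (real^'n)) set \<Rightarrow> ((real^'n) \<times> (real^'n) \<Rightarrow> real)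
   \<Rightarrow> real^'n \<Rightarrow> real^'n^'n" where
  "J_mat R k x = (\<chi> j i. \<Sum>(y, y')\<in>R.
      k (y, y') * monom_vec x y * (y $ i / x $ i) * (y' $ j - y $ j))"

definition J_tilde ::
  "((real^'n) \<times> (real^'n)) set \<Rightarrow> ((real^'n) \<times> (real^'n) \<Rightarrow> real)
   \<Rightarrow> real^'n \<Rightarrow> real^'n^'n" where
  "J_tilde R k x = (\<chi> j i. \<Sum>(y, y')\<in>R.
      k (y, y') * monom_vec x y * (y $ i / x $ i) *
      (if j = i then y' $ j - y $ j else y' $ j + y $ j))"

definition principal_minor :: "real^'n^'n \<Rightarrow> 'n set \<Rightarrow> real" where
  "principal_minor A S = (\<Sum>p\<in>{p. p permutes S}. of_int (sign p) * (\<Prod>i\<in>S. A $ i $ p i))"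

definition P0_matrix :: "real^'n^'n \<Rightarrow> bool" where
  "P0_matrix A \<longleftrightarrow> (\<forall>S. S \<noteq> {} \<longrightarrow> principal_minor A S \<ge> 0)"

end

theory Submission
  imports Defs
begin

(* Suppose lambda is a root with Re lambda >= 0. The root lambda = 0 is excluded by det J ~= 0,
   since J_0 = J. Otherwise every delay factor exp (-lambda tau) lies in the closed unit disc, so
   the off-diagonal entries of J_lambda - lambda I are dominated in modulus by those of J~, while
   each diagonal entry has modulus strictly larger than -J~_ii. For a null vector v of
   J_lambda - lambda I, the nonnegative vector |v| then has its sign strictly reversed by -J~ on
   its support, which no P0-matrix can do: adding to -J~ the positive diagonal that makes it
   annihilate |v| on the support yields a principal minor that is zero and yet positive. *)

lemma principal_minor_empty [simp]: "principal_minor A {} = 1"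
  by (simp add: principal_minor_def)

lemma det_eq_0_iff_null_vector:
  fixes A :: "'a::field^'n^'n"
  shows "det A = 0 \<longleftrightarrow> (\<exists>v. v \<noteq> 0 \<and> A *v v = 0)"
  using invertible_det_nz[of A] invertible_left_inverse[of A] matrix_left_invertible_ker[of A]
  by blast

lemma det_padded_eq_principal_minor:
  fixes F :: "real^'n^'n"
  shows "det (\<chi> i j. if i \<in> S \<and> j \<in> S then F$i$j else if i = j then 1 else 0) = principal_minor F S"
    (is "det ?P = _")
proof -
  have "det ?P = (\<Sum>p\<in>{p. p permutes S}. of_int (sign p) * (\<Prod>i\<in>UNIV. ?P$i$p i))"
    unfolding det_def
  proof (rule sum.mono_neutral_right)
    show "{p. p permutes S} \<subseteq> {p. p permutes UNIV}"
      by (auto intro: permutes_subset)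
    show "\<forall>p\<in>{p. p permutes UNIV} - {p. p permutes S}. of_int (sign p) * (\<Prod>i\<in>UNIV. ?P$i$p i) = 0"
    proof
      fix p assume "p \<in> {p. p permutes UNIV} - {p. p permutes S}"
      then obtain i where "i \<notin> S" "p i \<noteq> i"
        by (auto simp: permutes_def)
      then have "?P$i$p i = 0" by simp
      then have "(\<Prod>i\<in>UNIV. ?P$i$p i) = 0"
        by (meson UNIV_I finite prod_zero)
      then show "of_int (sign p) * (\<Prod>i\<in>UNIV. ?P$i$p i) = 0"
        by simp
    qed
  qed (simp add: finite_permutations)
  also have "\<dots> = principal_minor F S"
    unfolding principal_minor_def
  proof (rule sum.cong[OF refl])
    fix p assume "p \<in> {p. p permutes S}"
    then have p: "p permutes S" by simp
    have "(\<Prod>i\<in>UNIV. ?P$i$p i) = (\<Prod>i\<in>S. ?P$i$p i) * (\<Prod>i\<in>UNIV - S. ?P$i$p i)"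
      using prod.Int_Diff[of UNIV "\<lambda>i. ?P$i$p i" S] by simp
    also have "(\<Prod>i\<in>UNIV - S. ?P$i$p i) = 1"
      by (rule prod.neutral) (auto simp: permutes_not_in[OF p])
    also have "(\<Prod>i\<in>S. ?P$i$p i) = (\<Prod>i\<in>S. F$i$p i)"
      by (rule prod.cong) (auto simp: permutes_in_image[OF p])
    finally show "of_int (sign p) * (\<Prod>i\<in>UNIV. ?P$i$p i) = of_int (sign p) * (\<Prod>i\<in>S. F$i$p i)"
      by simp
  qed
  finally show ?thesis .
qed

lemma sum_permutes_diagonal_part:
  fixes B :: "real^'n^'n"
  assumes "U \<subseteq> S"
  shows "(\<Sum>p\<in>{p. p permutes S}. of_int (sign p) *
            ((\<Prod>i\<in>U. if i = p i then e i else 0) * (\<Prod>i\<in>S - U. B$i$p i)))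
         = (\<Prod>i\<in>U. e i) * principal_minor B (S - U)"
proof -
  let ?term = "\<lambda>p. of_int (sign p) * ((\<Prod>i\<in>U. if i = p i then e i else 0) * (\<Prod>i\<in>S - U. B$i$p i))"
  have "sum ?term {p. p permutes S} = sum ?term {p. p permutes (S - U)}"
  proof (rule sum.mono_neutral_right)
    show "{p. p permutes (S - U)} \<subseteq> {p. p permutes S}"
      by (auto intro: permutes_subset)
    show "\<forall>p\<in>{p. p permutes S} - {p. p permutes (S - U)}. ?term p = 0"
    proof
      fix p assume "p \<in> {p. p permutes S} - {p. p permutes (S - U)}"
      then have "\<exists>i\<in>U. p i \<noteq> i"
        by (auto simp: permutes_def)
      then obtain i where "i \<in> U" "p i \<noteq> i" ..
      then have "(\<Prod>i\<in>U. if i = p i then e i else 0) = 0"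
        by (intro prod_zero) (auto intro!: bexI[where x = i])
      then show "?term p = 0" by simp
    qed
  qed (simp add: finite_permutations)
  also have "\<dots> = (\<Sum>p\<in>{p. p permutes (S - U)}.
                    (\<Prod>i\<in>U. e i) * (of_int (sign p) * (\<Prod>i\<in>S - U. B$i$p i)))"
  proof (rule sum.cong[OF refl])
    fix p assume "p \<in> {p. p permutes (S - U)}"
    then have "(\<Prod>i\<in>U. if i = p i then e i else 0) = (\<Prod>i\<in>U. e i)"
      by (intro prod.cong) (auto simp: permutes_not_in)
    then show "?term p = (\<Prod>i\<in>U. e i) * (of_int (sign p) * (\<Prod>i\<in>S - U. B$i$p i))"
      by simp
  qed
  also have "\<dots> = (\<Prod>i\<in>U. e i) * principal_minor B (S - U)"
    unfolding principal_minor_def by (simp add: sum_distrib_left)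
  finally show ?thesis .
qed

lemma principal_minor_add_diagonal:
  fixes B :: "real^'n^'n"
  shows "principal_minor (\<chi> i j. B$i$j + (if i = j then e i else 0)) S
         = (\<Sum>U\<in>Pow S. (\<Prod>i\<in>U. e i) * principal_minor B (S - U))"
proof -
  let ?D = "\<lambda>p i. if i = p i then e i else 0"
  have "principal_minor (\<chi> i j. B$i$j + (if i = j then e i else 0)) S
        = (\<Sum>p\<in>{p. p permutes S}. of_int (sign p) *
             (\<Sum>U\<in>Pow S. (\<Prod>i\<in>U. ?D p i) * (\<Prod>i\<in>S - U. B$i$p i)))"
    unfolding principal_minor_def
  proof (rule sum.cong[OF refl])
    fix p
    have "(\<Prod>i\<in>S. (\<chi> i j. B$i$j + (if i = j then e i else 0))$i$p i) = (\<Prod>i\<in>S. ?D p i + B$i$p i)"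
      by (simp add: add.commute)
    also have "\<dots> = (\<Sum>U\<in>Pow S. (\<Prod>i\<in>U. ?D p i) * (\<Prod>i\<in>S - U. B$i$p i))"
      by (rule prod_add) simp
    finally show "of_int (sign p) * (\<Prod>i\<in>S. (\<chi> i j. B$i$j + (if i = j then e i else 0))$i$p i)
      = of_int (sign p) * (\<Sum>U\<in>Pow S. (\<Prod>i\<in>U. ?D p i) * (\<Prod>i\<in>S - U. B$i$p i))"
      by simp
  qed
  also have "\<dots> = (\<Sum>U\<in>Pow S. \<Sum>p\<in>{p. p permutes S}. of_int (sign p) *
                    ((\<Prod>i\<in>U. ?D p i) * (\<Prod>i\<in>S - U. B$i$p i)))"
    unfolding sum_distrib_left by (rule sum.swap)
  also have "\<dots> = (\<Sum>U\<in>Pow S. (\<Prod>i\<in>U. e i) * principal_minor B (S - U))"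
    by (intro sum.cong refl sum_permutes_diagonal_part) simp
  finally show ?thesis .
qed

lemma principal_minor_add_diagonal_pos:
  fixes B :: "real^'n^'n"
  assumes "P0_matrix B" and "\<forall>i\<in>S. 0 < e i"
  shows "0 < principal_minor (\<chi> i j. B$i$j + (if i = j then e i else 0)) S"
  unfolding principal_minor_add_diagonal
proof (rule sum_pos2)
  show "0 < (\<Prod>i\<in>S. e i) * principal_minor B (S - S)"
    using assms(2) by (simp add: prod_pos)
next
  fix U assume "U \<in> Pow S"
  then have "0 \<le> (\<Prod>i\<in>U. e i)"
    using assms(2) by (intro prod_nonneg) (auto intro: less_imp_le)
  moreover have "0 \<le> principal_minor B (S - U)"
  proof (cases "S - U = {}")
    case True
    then show ?thesis unfolding True by simp
  next
    case False
    then show ?thesis using assms(1) by (simp add: P0_matrix_def)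
  qed
  ultimately show "0 \<le> (\<Prod>i\<in>U. e i) * principal_minor B (S - U)"
    by simp
qed auto

lemma P0_matrix_nonneg_vector_witness:
  fixes B :: "real^'n^'n" and u :: "real^'n"
  assumes P0: "P0_matrix B" and u_nonneg: "\<forall>i. 0 \<le> u$i" and "u \<noteq> 0"
  shows "\<exists>i. 0 < u$i \<and> 0 \<le> (B *v u)$i"
proof (rule ccontr)
  assume "\<not> ?thesis"
  then have reversed: "(B *v u)$i < 0" if "0 < u$i" for i
    using that by (meson not_le)
  define S where "S = {i. 0 < u$i}"
  define e where "e i = - (B *v u)$i / u$i" for i
  define F :: "real^'n^'n" where "F = (\<chi> i j. B$i$j + (if i = j then e i else 0))"
  define P :: "real^'n^'n" where
    "P = (\<chi> i j. if i \<in> S \<and> j \<in> S then F$i$j else if i = j then 1 else 0)"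
  have e_pos: "\<forall>i\<in>S. 0 < e i"
    using reversed by (auto simp: S_def e_def divide_neg_pos)
  have u_outside: "u$i = 0" if "i \<notin> S" for i
    using u_nonneg that unfolding S_def by (metis mem_Collect_eq order_less_le)
  \<comment> \<open>The diagonal e is chosen so that F annihilates u on its support S.\<close>
  have "P *v u = 0"
  unfolding vec_eq_iff
  proof
    fix j
    show "(P *v u)$j = 0$j"
    proof (cases "j \<in> S")
      case True
      have "(P *v u)$j = (\<Sum>i\<in>UNIV. F$j$i * u$i)"
        unfolding matrix_vector_mult_def P_def using True u_outside by (auto intro!: sum.cong)
      also have "\<dots> = (\<Sum>i\<in>UNIV. B$j$i * u$i) + e j * u$j"
        unfolding F_def by (simp add: distrib_right sum.distrib if_distrib[of "\<lambda>a. a * _"] cong: if_cong)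
      also have "\<dots> = 0"
        using True unfolding e_def S_def by (simp add: matrix_vector_mult_def)
      finally show ?thesis by simp
    next
      case False
      then show ?thesis
        unfolding matrix_vector_mult_def P_def
        by (simp add: u_outside if_distrib[of "\<lambda>a. a * _"] cong: if_cong)
    qed
  qed
  then have "det P = 0"
    using \<open>u \<noteq> 0\<close> det_eq_0_iff_null_vector by blast
  moreover have "0 < det P"
    unfolding P_def det_padded_eq_principal_minor F_def
    by (rule principal_minor_add_diagonal_pos[OF P0 e_pos])
  ultimately show False by simp
qed

lemma P0_comparison_det_nonzero:
  fixes M :: "complex^'n^'n" and T :: "real^'n^'n"
  assumes P0: "P0_matrix (- T)"
    and offdiag: "\<And>i j. i \<noteq> j \<Longrightarrow> cmod (M$j$i) \<le> T$j$i"
    and diag: "\<And>j. - T$j$j < cmod (M$j$j)"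
  shows "det M \<noteq> 0"
proof
  assume "det M = 0"
  then obtain v where "v \<noteq> 0" and null: "M *v v = 0"
    using det_eq_0_iff_null_vector by blast
  define u :: "real^'n" where "u = (\<chi> i. cmod (v$i))"
  have "u \<noteq> 0" using \<open>v \<noteq> 0\<close> by (auto simp: u_def vec_eq_iff)
  have u_nonneg: "\<forall>i. 0 \<le> u$i" by (simp add: u_def)
  have reversed: "(- T *v u)$j < 0" if "0 < u$j" for j
  proof -
    have "(\<Sum>i\<in>UNIV. M$j$i * v$i) = 0"
      using arg_cong[OF null, of "\<lambda>w. w$j"] by (simp add: matrix_vector_mult_def)
    then have "M$j$j * v$j + (\<Sum>i\<in>UNIV-{j}. M$j$i * v$i) = 0"
      by (simp add: sum.remove[of UNIV j])
    then have "M$j$j * v$j = - (\<Sum>i\<in>UNIV-{j}. M$j$i * v$i)"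
      by (simp add: eq_neg_iff_add_eq_0)
    then have "cmod (M$j$j) * u$j = cmod (\<Sum>i\<in>UNIV-{j}. M$j$i * v$i)"
      by (simp add: u_def flip: norm_mult)
    also have "\<dots> \<le> (\<Sum>i\<in>UNIV-{j}. cmod (M$j$i) * u$i)"
      by (rule order_trans[OF norm_sum]) (simp add: u_def norm_mult)
    also have "\<dots> \<le> (\<Sum>i\<in>UNIV-{j}. T$j$i * u$i)"
      using offdiag by (intro sum_mono mult_right_mono) (auto simp: u_def)
    finally have "cmod (M$j$j) * u$j \<le> (\<Sum>i\<in>UNIV-{j}. T$j$i * u$i)" .
    moreover have "- T$j$j * u$j < cmod (M$j$j) * u$j"
      using diag that by (intro mult_strict_right_mono)
    moreover have "(- T *v u)$j = - T$j$j * u$j - (\<Sum>i\<in>UNIV-{j}. T$j$i * u$i)"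
      by (simp add: matrix_vector_mult_def sum.remove[of UNIV j] sum_negf)
    ultimately show ?thesis by simp
  qed
  obtain j where "0 < u$j" "0 \<le> (- T *v u)$j"
    using P0_matrix_nonneg_vector_witness[OF P0 u_nonneg \<open>u \<noteq> 0\<close>] by blast
  with reversed show False by fastforce
qed

lemma norm_delay_term_le:
  fixes E :: complex
  assumes "0 \<le> a" "0 \<le> b" "0 \<le> c" "cmod E \<le> 1"
  shows "cmod (of_real a * (of_real b * E - of_real c)) \<le> a * (b + c)"
proof -
  have "cmod (of_real b * E - of_real c) \<le> cmod (of_real b * E) + cmod (of_real c)"
    by (rule norm_triangle_ineq4)
  also have "\<dots> \<le> b + c"
    using assms by (simp add: norm_mult mult_left_le)
  finally show ?thesis
    using assms by (simp add: norm_mult mult_left_mono)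
qed

lemma Re_one_minus_unit_disc:
  fixes E :: complex
  assumes "cmod E \<le> 1" and "0 \<le> c"
  shows "of_real c * (1 - E) = 0 \<or> 0 < Re (of_real c * (1 - E))"
proof (cases "c = 0 \<or> E = 1")
  case False
  have "Re E \<le> 1"
    using abs_Re_le_cmod[of E] assms(1) by linarith
  moreover have "Re E \<noteq> 1"
  proof
    assume "Re E = 1"
    moreover have "(Re E)\<^sup>2 + (Im E)\<^sup>2 \<le> 1"
      using assms(1) by (metis cmod_power2 norm_ge_zero power_le_one)
    ultimately have "Im E = 0" by simp
    with \<open>Re E = 1\<close> have "E = 1" by (simp add: complex_eq_iff)
    with False show False by simp
  qed
  ultimately show ?thesis
    using False assms(2) by simp
qed auto

lemma sum_Re_pos_or_zero:
  fixes f :: "'a \<Rightarrow> complex"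
  assumes "finite I" and "\<And>i. i \<in> I \<Longrightarrow> f i = 0 \<or> 0 < Re (f i)"
  shows "sum f I = 0 \<or> 0 < Re (sum f I)"
proof (cases "\<forall>i\<in>I. f i = 0")
  case False
  then obtain i where "i \<in> I" "0 < Re (f i)"
    using assms(2) by blast
  moreover have "0 \<le> Re (f j)" if "j \<in> I" for j
    using assms(2)[OF that] by auto
  ultimately have "0 < (\<Sum>i\<in>I. Re (f i))"
    using assms(1) by (intro sum_pos2[where i = i])
  then show ?thesis by (simp add: Re_sum)
qed simp

lemma of_real_less_norm_add:
  fixes p :: complex
  assumes "0 \<le> Re p" and "p \<noteq> 0"
  shows "D < cmod (of_real D + p)"
proof (cases "0 \<le> D")
  case True
  have "0 < (Re p)\<^sup>2 + (Im p)\<^sup>2"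
    using assms(2) by (simp add: complex_eq_iff sum_power2_gt_zero_iff)
  moreover have "0 \<le> D * Re p"
    using True assms(1) by simp
  ultimately have "D\<^sup>2 < (D + Re p)\<^sup>2 + (Im p)\<^sup>2"
    by (simp add: power2_sum)
  then have "D < sqrt ((D + Re p)\<^sup>2 + (Im p)\<^sup>2)"
    by (rule real_less_rsqrt)
  then show ?thesis
    by (simp add: cmod_def)
qed (use norm_ge_zero[of "of_real D + p"] in linarith)

lemma monom_vec_pos:
  assumes "\<And>i. 0 < x $ i"
  shows "0 < monom_vec x y"
  unfolding monom_vec_def
proof (intro prod_pos)
  fix i
  show "0 < x $ i powr y $ i"
    using assms[of i] by simp
qed

lemma det_map_matrix_of_real:
  fixes A :: "real^'n^'n"
  shows "det (map_matrix of_real A :: 'a::{real_algebra_1, comm_ring_1}^'n^'n) = of_real (det A)"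
  unfolding det_def by (simp add: of_real_sum of_real_prod)

lemma det_J_lambda_0: "det (J_lambda R k tau x 0) = of_real (det (J_mat R k x))"
proof -
  have "J_lambda R k tau x 0 = map_matrix of_real (J_mat R k x)"
    by (simp add: vec_eq_iff J_lambda_def J_mat_def split_def of_real_sum)
  then show ?thesis
    by (simp add: det_map_matrix_of_real)
qed

locale nonneg_delay_system =
  fixes R :: "((real^'n) \<times> (real^'n)) set"
    and k tau :: "(real^'n) \<times> (real^'n) \<Rightarrow> real"
    and x :: "real^'n"
  assumes finite_reactions: "finite R"
    and complexes_nonneg: "r \<in> R \<Longrightarrow> 0 \<le> fst r $ i \<and> 0 \<le> snd r $ i"
    and rate_constants_nonneg: "r \<in> R \<Longrightarrow> 0 \<le> k r"
    and delays_nonneg: "r \<in> R \<Longrightarrow> 0 \<le> tau r"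
    and state_pos: "0 < x $ i"
begin

definition rate_deriv :: "'n \<Rightarrow> (real^'n) \<times> (real^'n) \<Rightarrow> real" where
  "rate_deriv i r = k r * monom_vec x (fst r) * (fst r $ i / x $ i)"

lemma rate_deriv_nonneg: "r \<in> R \<Longrightarrow> 0 \<le> rate_deriv i r"
  unfolding rate_deriv_def
  using rate_constants_nonneg monom_vec_pos[OF state_pos] complexes_nonneg state_pos
  by (simp add: less_imp_le)

lemma J_lambda_entry:
  "J_lambda R k tau x z $ j $ i = (\<Sum>r\<in>R. of_real (rate_deriv i r) *
     (of_real (snd r $ j) * exp (- z * of_real (tau r)) - of_real (fst r $ j)))"
  unfolding J_lambda_def rate_deriv_def by (simp add: split_def)

lemma J_tilde_entry:
  "J_tilde R k x $ j $ i = (\<Sum>r\<in>R. rate_deriv i r *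
     (if j = i then snd r $ j - fst r $ j else snd r $ j + fst r $ j))"
  unfolding J_tilde_def rate_deriv_def by (simp add: split_def)

lemma norm_delay_factor_le_1:
  assumes "0 \<le> Re z" and "r \<in> R"
  shows "cmod (exp (- z * of_real (tau r))) \<le> 1"
  using assms delays_nonneg[OF assms(2)] by (simp add: norm_exp_eq_Re)

lemma norm_J_lambda_offdiag_le:
  assumes "0 \<le> Re z" and "i \<noteq> j"
  shows "cmod (J_lambda R k tau x z $ j $ i) \<le> J_tilde R k x $ j $ i"
proof -
  have "cmod (J_lambda R k tau x z $ j $ i) \<le> (\<Sum>r\<in>R. cmod (of_real (rate_deriv i r) *
          (of_real (snd r $ j) * exp (- z * of_real (tau r)) - of_real (fst r $ j))))"
    unfolding J_lambda_entry by (rule norm_sum)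
  also have "\<dots> \<le> (\<Sum>r\<in>R. rate_deriv i r * (snd r $ j + fst r $ j))"
    using rate_deriv_nonneg complexes_nonneg norm_delay_factor_le_1[OF assms(1)]
    by (intro sum_mono norm_delay_term_le) auto
  also have "\<dots> = J_tilde R k x $ j $ i"
    using assms(2) by (simp add: J_tilde_entry)
  finally show ?thesis .
qed

lemma norm_J_lambda_diag_gt:
  assumes "0 \<le> Re z" and "z \<noteq> 0"
  shows "- J_tilde R k x $ j $ j < cmod (J_lambda R k tau x z $ j $ j - z)"
proof -
  define q where
    "q = (\<Sum>r\<in>R. of_real (rate_deriv j r * snd r $ j) * (1 - exp (- z * of_real (tau r))))"
  have "J_lambda R k tau x z $ j $ j - z = - (of_real (- J_tilde R k x $ j $ j) + (z + q))"
    unfolding J_lambda_entry J_tilde_entry q_def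
    by (simp add: of_real_sum algebra_simps flip: sum_subtractf sum.distrib)
  moreover have "q = 0 \<or> 0 < Re q"
    unfolding q_def using finite_reactions
  proof (rule sum_Re_pos_or_zero)
    fix r assume "r \<in> R"
    then show "of_real (rate_deriv j r * snd r $ j) * (1 - exp (- z * of_real (tau r))) = 0 \<or>
        0 < Re (of_real (rate_deriv j r * snd r $ j) * (1 - exp (- z * of_real (tau r))))"
      using rate_deriv_nonneg complexes_nonneg norm_delay_factor_le_1[OF assms(1)]
      by (intro Re_one_minus_unit_disc) auto
  qed
  then have "0 \<le> Re (z + q)" and "z + q \<noteq> 0"
    using assms by (auto simp: complex_eq_iff)
  ultimately show ?thesis
    using of_real_less_norm_add by (metis norm_minus_cancel)
qed

lemma det_char_matrix_nonzero:
  assumes "P0_matrix (- J_tilde R k x)" and "0 \<le> Re z" and "z \<noteq> 0"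
  shows "det (J_lambda R k tau x z - mat z) \<noteq> 0"
  using assms(1)
proof (rule P0_comparison_det_nonzero)
  show "cmod ((J_lambda R k tau x z - mat z) $ j $ i) \<le> J_tilde R k x $ j $ i" if "i \<noteq> j" for i j
    using norm_J_lambda_offdiag_le[OF assms(2) that] that by (simp add: mat_def)
  show "- J_tilde R k x $ j $ j < cmod ((J_lambda R k tau x z - mat z) $ j $ j)" for j
    using norm_J_lambda_diag_gt[OF assms(2,3)] by (simp add: mat_def)
qed

end

lemma nonneg_delay_system_at_equilibrium:
  assumes "reaction_network V R" and "\<forall>r\<in>R. 0 < k r" and "\<forall>r\<in>R. 0 \<le> tau r"
    and "delay_equilibrium R k tau x"
  shows "nonneg_delay_system R k tau x"
proof
  have "finite V" "R \<subseteq> V \<times> V" and V_nonneg: "\<forall>y\<in>V. \<forall>i. 0 \<le> y $ i"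
    using assms(1) by (simp_all add: reaction_network_def)
  then show "finite R"
    by (simp add: finite_subset)
  show "0 \<le> fst r $ i \<and> 0 \<le> snd r $ i" if "r \<in> R" for r i
    using \<open>R \<subseteq> V \<times> V\<close> V_nonneg that by (cases r) auto
  show "0 \<le> k r" and "0 \<le> tau r" if "r \<in> R" for r
    using assms(2,3) that by (auto simp: less_imp_le)
  show "0 < x $ i" for i
    using assms(4) by (simp add: delay_equilibrium_def)
qed

theorem theorem1:
  fixes V :: "(real^'n) set"
    and R :: "((real^'n) \<times> (real^'n)) set"
    and k tau :: "(real^'n) \<times> (real^'n) \<Rightarrow> real"
    and x :: "real^'n"
  assumes "reaction_network V R"
    and "non_autocatalytic R"
    and "\<forall>r\<in>R. k r > 0"
    and "\<forall>r\<in>R. tau r \<ge> 0"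
    and "delay_equilibrium R k tau x"
    and "det (J_mat R k x) \<noteq> 0"
    and "\<forall>i. J_tilde R k x $ i $ i < 0"
    and "P0_matrix (- J_tilde R k x)"
  shows "\<forall>z::complex. det (J_lambda R k tau x z - mat z) = 0 \<longrightarrow> Re z < 0"
proof (intro allI impI)
  fix z :: complex
  assume root: "det (J_lambda R k tau x z - mat z) = 0"
  interpret nonneg_delay_system R k tau x
    using assms(1,3,4,5) by (rule nonneg_delay_system_at_equilibrium)
  have "z \<noteq> 0"
  proof
    assume "z = 0"
    with root assms(6) show False
      by (simp add: det_J_lambda_0)
  qed
  show "Re z < 0"
    using det_char_matrix_nonzero[OF assms(8) _ \<open>z \<noteq> 0\<close>] root by (meson not_le)
qed

end
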